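(* Let $p>1$, let $T_p(\mathbf{x})=\sum_{i=1}^M P(\theta_i|\mathbf{x})^{\frac{p}{p-1}}$, and define $$B_p^{(2)}=1-{\rm E}\Big[\Big(\sum_{i=1}^M P(\theta_i|\mathbf{x})^{\frac{p}{p-1}}\Big)^{\frac{p-1}{p}}\Big].$$ Then for every measurable $\zeta_2:\mathcal{X}\to(0,\infty)$ with ${\rm E}[\zeta_2(\mathbf{x})]<\infty$ and ${\rm E}\big[\zeta_2(\mathbf{x})^{\frac{1}{1-p}}T_p(\mathbf{x})\big]<\infty$, $$1-{\rm E}^{\frac1p}[\zeta_2(\mathbf{x})]\,{\rm E}^{\frac{p-1}{p}}\big[\zeta_2(\mathbf{x})^{\frac{1}{1-p}}T_p(\mathbf{x})\big]\le B_p^{(2)},$$ with equality when $\zeta_2=T_p^{\frac{p-1}{p}}$. Consequently, every detector satisfies $P_e\ge B_p^{(2)}$ for all $p>1$.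
   Context: $M$-ary hypothesis testing: the true hypothesis $\theta$ is a random variable with values in $\{\theta_1,\ldots,\theta_M\}$, $\mathbf{x}$ is a random observation in a measurable space $\mathcal{X}$, and $P(\theta_i|\mathbf{x})$ is the posterior probability of $\theta_i$ given $\mathbf{x}$, assumed to satisfy $P(\theta_i|\mathbf{x})>0$ for all $\mathbf{x}$, $i$. A detector is a measurable map $\hat\theta:\mathcal{X}\to\{\theta_1,\ldots,\theta_M\}$, and its probability of error is $P_e=\Pr(\hat\theta(\mathbf{x})\neq\theta)$. ${\rm E}^a[Y]$ denotes $({\rm E}[Y])^a$. *)

theory Defs
  imports "HOL-Probability.Probability"
begin

text \<open>Hypotheses are the elements of a finite type 'h (so M = CARD('h)).
  The observation x has marginal distribution the probability space Mx on 'x,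
  and post x h is the posterior P(h | x).\<close>

definition Tp :: "real \<Rightarrow> ('x \<Rightarrow> 'h::finite \<Rightarrow> real) \<Rightarrow> 'x \<Rightarrow> real" where
  "Tp p post x = (\<Sum>h\<in>UNIV. post x h powr (p / (p - 1)))"

definition Bp2 :: "'x measure \<Rightarrow> ('x \<Rightarrow> 'h::finite \<Rightarrow> real) \<Rightarrow> real \<Rightarrow> real" where
  "Bp2 Mx post p = 1 - (\<integral>x. (Tp p post x) powr ((p - 1) / p) \<partial>Mx)"

definition joint :: "'x measure \<Rightarrow> ('x \<Rightarrow> 'h::finite \<Rightarrow> real) \<Rightarrow> ('x \<times> 'h) measure" where
  "joint Mx post = density (Mx \<Otimes>\<^sub>M count_space UNIV) (\<lambda>(x, h). ennreal (post x h))"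

definition perr :: "'x measure \<Rightarrow> ('x \<Rightarrow> 'h::finite \<Rightarrow> real) \<Rightarrow> ('x \<Rightarrow> 'h) \<Rightarrow> real" where
  "perr Mx post d = measure (joint Mx post) {(x, h). x \<in> space Mx \<and> d x \<noteq> h}"

end

theory Submission
  imports Defs
begin

(*
  Write T = Tp p post and \<beta> = (p - 1) / p, so that Bp2 = 1 - E[T^\<beta>].
  (1) For every positive weight \<zeta>, the pointwise identity
      \<zeta>^(1/p) * (\<zeta>^(1/(1-p)) * T)^\<beta> = T^\<beta>
      together with Hoelder's inequality for the conjugate weights 1/p and \<beta>
      gives E[T^\<beta>] \<le> E[\<zeta>]^(1/p) * E[\<zeta>^(1/(1-p)) * T]^\<beta>, which is the first claim.
  (2) For \<zeta> = T^\<beta> both expectations equal E[T^\<beta>], so Hoelder is tight.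
  (3) A detector d errs with probability 1 - E[post x (d x)], and a single
      posterior value is bounded by the l^(p/(p-1)) norm T^\<beta> of the whole
      posterior vector; hence Pe \<ge> Bp2.
*)

text \<open>It follows by
  integrating Young's inequality applied to f/E[f] and g/E[g].\<close>

lemma (in prob_space) hoelder_inequality_pos:
  fixes f g :: "'a \<Rightarrow> real"
  assumes weights: "\<alpha> > 0" "\<beta> > 0" "\<alpha> + \<beta> = 1"
    and f: "integrable M f" "\<And>x. x \<in> space M \<Longrightarrow> f x > 0"
    and g: "integrable M g" "\<And>x. x \<in> space M \<Longrightarrow> g x > 0"
    and fg: "integrable M (\<lambda>x. f x powr \<alpha> * g x powr \<beta>)"
  shows "(\<integral>x. f x powr \<alpha> * g x powr \<beta> \<partial>M) \<le> (\<integral>x. f x \<partial>M) powr \<alpha> * (\<integral>x. g x \<partial>M) powr \<beta>"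
proof -
  define A where "A = (\<integral>x. f x \<partial>M)"
  define C where "C = (\<integral>x. g x \<partial>M)"
  define K where "K = A powr \<alpha> * C powr \<beta>"
  have A: "A > 0" unfolding A_def using f by (intro expectation_greater AE_I2) auto
  have C: "C > 0" unfolding C_def using g by (intro expectation_greater AE_I2) auto
  have K: "K > 0" using A C unfolding K_def by simp
  have young: "f x powr \<alpha> * g x powr \<beta> \<le> K * (\<alpha> / A * f x + \<beta> / C * g x)"
    if x: "x \<in> space M" for x
  proof -
    have fx: "f x > 0" and gx: "g x > 0" using x f g by auto
    have "(f x / A) powr \<alpha> * (g x / C) powr \<beta> \<le> \<alpha> * (f x / A) + \<beta> * (g x / C)"
      using Youngs_inequality_0[of \<alpha> \<beta> "f x / A" "g x / C"] weights fx gx A C by simp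
    moreover have "(f x / A) powr \<alpha> * (g x / C) powr \<beta> = f x powr \<alpha> * g x powr \<beta> / K"
      using fx gx A C unfolding K_def by (simp add: powr_divide)
    ultimately show ?thesis using K by (simp add: divide_le_eq mult.commute)
  qed
  have "(\<integral>x. f x powr \<alpha> * g x powr \<beta> \<partial>M) \<le> (\<integral>x. K * (\<alpha> / A * f x + \<beta> / C * g x) \<partial>M)"
    using young f g fg by (intro integral_mono) auto
  also have "\<dots> = K * (\<alpha> / A * A + \<beta> / C * C)"
    using f g unfolding A_def C_def by simp
  also have "\<dots> = K" using A C weights by simp
  finally show ?thesis unfolding K_def A_def C_def .
qed

text \<open>The exponents 1/p and (p - 1)/p are chosen so that the weight \<zeta> cancels
  from the Hoelder integrand, leaving T^((p-1)/p).\<close>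

lemma powr_conjugate_cancel:
  fixes p z t :: real
  assumes "p > 1" "z > 0"
  shows "z powr (1 / p) * (z powr (1 / (1 - p)) * t) powr ((p - 1) / p) = t powr ((p - 1) / p)"
proof -
  have "z powr (1 / p) * (z powr (1 / (1 - p)) * t) powr ((p - 1) / p)
      = z powr (1 / p + 1 / (1 - p) * ((p - 1) / p)) * t powr ((p - 1) / p)"
    by (simp add: powr_mult powr_powr powr_add)
  also have "1 / p + 1 / (1 - p) * ((p - 1) / p) = 0"
    using assms(1) by (simp add: field_simps)
  finally show ?thesis using assms(2) by simp
qed

lemma powr_optimal_weight:
  fixes p t :: real
  assumes "p > 1" "t > 0"
  shows "(t powr ((p - 1) / p)) powr (1 / (1 - p)) * t = t powr ((p - 1) / p)"
proof -
  have "(t powr ((p - 1) / p)) powr (1 / (1 - p)) * t = t powr ((p - 1) / p * (1 / (1 - p)) + 1)"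
    using assms(2) by (simp add: powr_powr powr_add)
  also have "(p - 1) / p * (1 / (1 - p)) + 1 = (p - 1) / p"
    using assms(1) by (simp add: field_simps)
  finally show ?thesis .
qed

lemma coordinate_le_lq_norm:
  fixes a :: "'i \<Rightarrow> real"
  assumes "finite I" "k \<in> I" "\<And>i. i \<in> I \<Longrightarrow> a i \<ge> 0" "q > 0"
  shows "a k \<le> (\<Sum>i\<in>I. a i powr q) powr (1 / q)"
proof -
  have "a k powr q \<le> (\<Sum>i\<in>I. a i powr q)"
    using assms(1,2) by (intro member_le_sum) simp_all
  then have "(a k powr q) powr (1 / q) \<le> (\<Sum>i\<in>I. a i powr q) powr (1 / q)"
    using assms(4) by (intro powr_mono2) auto
  moreover have "(a k powr q) powr (1 / q) = a k"
    using assms(2-4) by (simp add: powr_powr)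
  ultimately show ?thesis by simp
qed

locale posterior_model = prob_space Mx for Mx :: "'x measure" +
  fixes post :: "'x \<Rightarrow> 'h::finite \<Rightarrow> real"
  assumes post_measurable[measurable]: "\<And>h. (\<lambda>x. post x h) \<in> borel_measurable Mx"
    and post_pos: "\<And>x h. x \<in> space Mx \<Longrightarrow> post x h > 0"
    and post_sum: "\<And>x. x \<in> space Mx \<Longrightarrow> (\<Sum>h\<in>UNIV. post x h) = 1"
begin

lemma post_le_one: "x \<in> space Mx \<Longrightarrow> post x h \<le> 1"
  using member_le_sum[of h UNIV "post x"] post_pos post_sum by (fastforce simp: less_imp_le)

lemma Tp_measurable[measurable]: "Tp p post \<in> borel_measurable Mx"
  unfolding Tp_def by measurable

lemma Tp_pos: "x \<in> space Mx \<Longrightarrow> Tp p post x > 0"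
  unfolding Tp_def using post_pos[of x] by (intro sum_pos) (simp_all add: less_imp_neq[symmetric])

text \<open>For p > 1 all summands of Tp are at most 1, so Tp is bounded by the number of
  hypotheses; in particular Tp^((p-1)/p) is integrable.\<close>

lemma Tp_le_card:
  assumes "p > 1" "x \<in> space Mx"
  shows "Tp p post x \<le> real CARD('h)"
proof -
  have "Tp p post x \<le> (\<Sum>h\<in>(UNIV::'h set). 1)"
    unfolding Tp_def using assms post_pos post_le_one
    by (intro sum_mono powr_le1) (auto simp: less_imp_le)
  then show ?thesis by simp
qed

lemma integrable_Tp_powr:
  assumes "p > 1"
  shows "integrable Mx (\<lambda>x. Tp p post x powr ((p - 1) / p))"
proof (rule integrable_const_bound[where B = "real CARD('h) powr ((p - 1) / p)"])
  show "AE x in Mx. norm (Tp p post x powr ((p - 1) / p)) \<le> real CARD('h) powr ((p - 1) / p)"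
    using assms Tp_pos Tp_le_card by (intro AE_I2) (auto intro!: powr_mono2 simp: less_imp_le)
qed measurable

lemma hoelder_bound:
  assumes p: "p > 1"
    and \<zeta>_pos: "\<And>x. x \<in> space Mx \<Longrightarrow> \<zeta> x > 0"
    and \<zeta>_int: "integrable Mx \<zeta>"
    and g_int: "integrable Mx (\<lambda>x. \<zeta> x powr (1 / (1 - p)) * Tp p post x)"
  shows "(\<integral>x. Tp p post x powr ((p - 1) / p) \<partial>Mx)
      \<le> (\<integral>x. \<zeta> x \<partial>Mx) powr (1 / p)
         * (\<integral>x. \<zeta> x powr (1 / (1 - p)) * Tp p post x \<partial>Mx) powr ((p - 1) / p)"
proof -
  let ?g = "\<lambda>x. \<zeta> x powr (1 / (1 - p)) * Tp p post x"
  have g_pos: "?g x > 0" if "x \<in> space Mx" for x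
    using \<zeta>_pos[OF that] Tp_pos[OF that] by simp
  have cancel: "\<zeta> x powr (1 / p) * ?g x powr ((p - 1) / p) = Tp p post x powr ((p - 1) / p)"
    if "x \<in> space Mx" for x
    using powr_conjugate_cancel p \<zeta>_pos that by blast
  have "integrable Mx (\<lambda>x. \<zeta> x powr (1 / p) * ?g x powr ((p - 1) / p))"
    using integrable_Tp_powr[OF p] by (subst Bochner_Integration.integrable_cong[OF refl cancel]) auto
  then have "(\<integral>x. \<zeta> x powr (1 / p) * ?g x powr ((p - 1) / p) \<partial>Mx)
      \<le> (\<integral>x. \<zeta> x \<partial>Mx) powr (1 / p) * (\<integral>x. ?g x \<partial>Mx) powr ((p - 1) / p)"
    using p \<zeta>_pos \<zeta>_int g_int g_pos
    by (intro hoelder_inequality_pos) (auto simp: field_simps)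
  moreover have "(\<integral>x. \<zeta> x powr (1 / p) * ?g x powr ((p - 1) / p) \<partial>Mx)
      = (\<integral>x. Tp p post x powr ((p - 1) / p) \<partial>Mx)"
    using cancel by (intro Bochner_Integration.integral_cong) auto
  ultimately show ?thesis by simp
qed

text \<open>For the weight \<zeta> = Tp^((p-1)/p) both expectations equal E[Tp^((p-1)/p)] and
  the exponents 1/p and (p-1)/p add up to 1, so the Hoelder bound is attained.\<close>

lemma hoelder_bound_attained:
  assumes p: "p > 1"
  shows "(\<integral>x. Tp p post x powr ((p - 1) / p) \<partial>Mx) powr (1 / p)
         * (\<integral>x. (Tp p post x powr ((p - 1) / p)) powr (1 / (1 - p)) * Tp p post x \<partial>Mx)
             powr ((p - 1) / p)
      = (\<integral>x. Tp p post x powr ((p - 1) / p) \<partial>Mx)"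
proof -
  have "(\<integral>x. (Tp p post x powr ((p - 1) / p)) powr (1 / (1 - p)) * Tp p post x \<partial>Mx)
      = (\<integral>x. Tp p post x powr ((p - 1) / p) \<partial>Mx)"
    using powr_optimal_weight[OF p] Tp_pos by (intro Bochner_Integration.integral_cong) auto
  moreover have "(\<integral>x. Tp p post x powr ((p - 1) / p) \<partial>Mx) \<ge> 0"
    by (intro Bochner_Integration.integral_nonneg) simp
  moreover have "1 / p + (p - 1) / p = 1"
    using p by (simp add: field_simps)
  ultimately show ?thesis by (simp flip: powr_add)
qed

lemma integrable_post_detector:
  assumes "d \<in> Mx \<rightarrow>\<^sub>M count_space UNIV"
  shows "integrable Mx (\<lambda>x. post x (d x))"
  using assms post_pos post_le_one
  by (intro integrable_const_bound[where B = 1] AE_I2) (auto simp: less_imp_le)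

lemma emeasure_joint:
  assumes A: "A \<in> sets (Mx \<Otimes>\<^sub>M count_space UNIV)"
  shows "emeasure (joint Mx post) A
      = (\<integral>\<^sup>+ x. ennreal (\<Sum>h\<in>UNIV. post x h * indicator A (x, h)) \<partial>Mx)"
proof -
  interpret hyp: finite_measure "count_space (UNIV :: 'h set)"
    by (rule finite_measure_count_space) simp
  have dens[measurable]: "(\<lambda>(x, h). ennreal (post x h)) \<in> borel_measurable (Mx \<Otimes>\<^sub>M count_space UNIV)"
    by measurable
  have "emeasure (joint Mx post) A
      = (\<integral>\<^sup>+ z. (\<lambda>(x, h). ennreal (post x h)) z * indicator A z \<partial>(Mx \<Otimes>\<^sub>M count_space UNIV))"
    unfolding joint_def by (rule emeasure_density[OF dens A])
  also have "\<dots> = (\<integral>\<^sup>+ x. \<integral>\<^sup>+ h. ennreal (post x h) * indicator A (x, h) \<partial>count_space UNIV \<partial>Mx)"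
    using A by (subst hyp.nn_integral_fst[symmetric]) auto
  also have "\<dots> = (\<integral>\<^sup>+ x. ennreal (\<Sum>h\<in>UNIV. post x h * indicator A (x, h)) \<partial>Mx)"
  proof (rule nn_integral_cong)
    fix x assume x: "x \<in> space Mx"
    have "(\<integral>\<^sup>+ h. ennreal (post x h) * indicator A (x, h) \<partial>count_space UNIV)
        = (\<Sum>h\<in>UNIV. ennreal (post x h * indicator A (x, h)))"
      by (subst nn_integral_count_space_finite, simp, rule sum.cong, simp, simp split: split_indicator)
    also have "\<dots> = ennreal (\<Sum>h\<in>UNIV. post x h * indicator A (x, h))"
      using post_pos[OF x] by (intro sum_ennreal) (auto simp: less_imp_le)
    finally show "(\<integral>\<^sup>+ h. ennreal (post x h) * indicator A (x, h) \<partial>count_space UNIV)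
        = ennreal (\<Sum>h\<in>UNIV. post x h * indicator A (x, h))" .
  qed
  finally show ?thesis .
qed

lemma perr_eq:
  assumes d[measurable]: "d \<in> Mx \<rightarrow>\<^sub>M count_space UNIV"
  shows "perr Mx post d = 1 - (\<integral>x. post x (d x) \<partial>Mx)"
proof -
  define A where "A = {(x, h). x \<in> space Mx \<and> d x \<noteq> h}"
  have "A = {z \<in> space (Mx \<Otimes>\<^sub>M count_space UNIV). d (fst z) \<noteq> snd z}"
    unfolding A_def by (auto simp: space_pair_measure)
  then have A_sets: "A \<in> sets (Mx \<Otimes>\<^sub>M count_space UNIV)"
    by simp
  have correct_int: "integrable Mx (\<lambda>x. post x (d x))"
    using d by (rule integrable_post_detector)
  have section_mass: "(\<Sum>h\<in>UNIV. post x h * indicator A (x, h)) = 1 - post x (d x)"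
    if x: "x \<in> space Mx" for x
  proof -
    have "(\<Sum>h\<in>UNIV. post x h * indicator A (x, h)) = (\<Sum>h\<in>UNIV - {d x}. post x h)"
      using x by (intro sum.mono_neutral_cong_right) (auto simp: A_def)
    also have "\<dots> = 1 - post x (d x)"
      using post_sum[OF x] by (simp add: sum_diff1)
    finally show ?thesis .
  qed
  have "emeasure (joint Mx post) A = (\<integral>\<^sup>+ x. ennreal (1 - post x (d x)) \<partial>Mx)"
    unfolding emeasure_joint[OF A_sets] using section_mass by (intro nn_integral_cong) simp
  also have "\<dots> = ennreal (\<integral>x. 1 - post x (d x) \<partial>Mx)"
    using correct_int post_le_one by (intro nn_integral_eq_integral AE_I2) auto
  finally have "perr Mx post d = (\<integral>x. 1 - post x (d x) \<partial>Mx)"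
    unfolding perr_def measure_def A_def[symmetric]
    using post_le_one by (simp add: integral_nonneg)
  also have "\<dots> = 1 - (\<integral>x. post x (d x) \<partial>Mx)"
    using correct_int by (simp add: prob_space)
  finally show ?thesis .
qed

text \<open>The posterior of any single hypothesis is at most Tp^((p-1)/p), the
  l^(p/(p-1)) norm of the posterior vector; hence every detector errs with
  probability at least Bp2.\<close>

lemma perr_ge_Bp2:
  assumes p: "p > 1" and d: "d \<in> Mx \<rightarrow>\<^sub>M count_space UNIV"
  shows "perr Mx post d \<ge> Bp2 Mx post p"
proof -
  have "post x (d x) \<le> Tp p post x powr ((p - 1) / p)" if "x \<in> space Mx" for x
    using coordinate_le_lq_norm[of UNIV "d x" "post x" "p / (p - 1)"] post_pos[OF that] p
    unfolding Tp_def by (simp add: less_imp_le)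
  then have "(\<integral>x. post x (d x) \<partial>Mx) \<le> (\<integral>x. Tp p post x powr ((p - 1) / p) \<partial>Mx)"
    using integrable_post_detector[OF d] integrable_Tp_powr[OF p] by (intro integral_mono) auto
  then show ?thesis
    unfolding perr_eq[OF d] Bp2_def by simp
qed

end

theorem mainTheorem6:
  fixes Mx :: "'x measure" and post :: "'x \<Rightarrow> 'h::finite \<Rightarrow> real" and p :: real
  assumes "prob_space Mx"
    and "\<And>h. (\<lambda>x. post x h) \<in> borel_measurable Mx"
    and "\<And>x h. x \<in> space Mx \<Longrightarrow> post x h > 0"
    and "\<And>x. x \<in> space Mx \<Longrightarrow> (\<Sum>h\<in>UNIV. post x h) = 1"
    and "p > 1"
  shows "(\<forall>\<zeta>2 :: 'x \<Rightarrow> real. \<zeta>2 \<in> borel_measurable Mx \<longrightarrow> (\<forall>x\<in>space Mx. \<zeta>2 x > 0)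
            \<longrightarrow> integrable Mx \<zeta>2
            \<longrightarrow> integrable Mx (\<lambda>x. \<zeta>2 x powr (1 / (1 - p)) * Tp p post x)
            \<longrightarrow> 1 - (\<integral>x. \<zeta>2 x \<partial>Mx) powr (1 / p)
                  * (\<integral>x. \<zeta>2 x powr (1 / (1 - p)) * Tp p post x \<partial>Mx) powr ((p - 1) / p)
                \<le> Bp2 Mx post p)
       \<and> (let \<zeta>2 = (\<lambda>x. Tp p post x powr ((p - 1) / p)) in
            1 - (\<integral>x. \<zeta>2 x \<partial>Mx) powr (1 / p)
                  * (\<integral>x. \<zeta>2 x powr (1 / (1 - p)) * Tp p post x \<partial>Mx) powr ((p - 1) / p)
                = Bp2 Mx post p)
       \<and> (\<forall>d. d \<in> Mx \<rightarrow>\<^sub>M count_space UNIV \<longrightarrow> perr Mx post d \<ge> Bp2 Mx post p)"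
proof -
  interpret posterior_model Mx post
    by (intro posterior_model.intro posterior_model_axioms.intro assms(1)) (use assms(2-4) in auto)
  have "1 - (\<integral>x. \<zeta> x \<partial>Mx) powr (1 / p)
          * (\<integral>x. \<zeta> x powr (1 / (1 - p)) * Tp p post x \<partial>Mx) powr ((p - 1) / p)
        \<le> Bp2 Mx post p"
    if "\<forall>x\<in>space Mx. \<zeta> x > 0" "integrable Mx \<zeta>"
      "integrable Mx (\<lambda>x. \<zeta> x powr (1 / (1 - p)) * Tp p post x)" for \<zeta>
    using hoelder_bound[OF assms(5), of \<zeta>] that unfolding Bp2_def by simp
  moreover have "1 - (\<integral>x. Tp p post x powr ((p - 1) / p) \<partial>Mx) powr (1 / p)
        * (\<integral>x. (Tp p post x powr ((p - 1) / p)) powr (1 / (1 - p)) * Tp p post x \<partial>Mx)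
            powr ((p - 1) / p)
      = Bp2 Mx post p"
    unfolding hoelder_bound_attained[OF assms(5)] Bp2_def ..
  ultimately show ?thesis
    using perr_ge_Bp2[OF assms(5)] unfolding Let_def by blast
qed

end
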